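(* Let $\{\mathbf{x}^k=(\mathbf{x}_{(i)}^k)_i\}$, $\{\mathbf{y}^k=(\mathbf{y}_{(i)}^k)_i\}$, $\{\phi^k\}$ be generated by SONATA in the setting below, and let $\widetilde{\mathbf{x}}_i^k$ be the local minimizers it computes. There is a finite constant $B_2>0$, independent of $k$, such that for all $k\ge0$ and $i=1,\dots,I$, $$\|\widetilde{\mathbf{x}}_i^k-\widehat{\mathbf{x}}_i(\mathbf{x}_{(i)}^k)\|\le B_2\Big(\|\mathbf{y}_{(i)}^k-\bar{\mathbf{y}}_\phi^k\|+\sum_{j=1}^I\|\mathbf{x}_{(j)}^k-\bar{\mathbf{x}}_\phi^k\|\Big),$$ where $\bar{\mathbf{x}}_\phi^k\triangleq\frac1I\sum_{j}\phi_{(j)}^k\mathbf{x}_{(j)}^k$ and $\bar{\mathbf{y}}_\phi^k\triangleq\frac1I\sum_j\phi_{(j)}^k\mathbf{y}_{(j)}^k$.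
   Context: Problem: minimize $V(\mathbf{x})\triangleq F(\mathbf{x})+G(\mathbf{x})$, $F=\sum_{i=1}^If_i$, over $\mathbf{x}\in X$, where $X\subseteq\mathbb{R}^m$ is nonempty closed convex; each $f_i:O\to\mathbb{R}$ is $C^1$ on an open set $O\supseteq X$ with $\nabla f_i$ $L_i$-Lipschitz on $X$; $G:O\to\mathbb{R}$ is convex; $V$ is bounded below on $X$. Network: digraphs $G^k=(\{1,\dots,I\},E^k)$, $(j,i)\in E^k$ meaning $j$ can send to $i$, $B$-strongly connected ($\bigcup_{t=k}^{k+B-1}E^t$ strongly connected for every $k$). $\mathbf{A}^k=(a_{ij}^k)$: $a_{ij}^k=0$ if $j\ne i$ and $(j,i)\notin E^k$, $a_{ij}^k\ge\kappa$ if $(j,i)\in E^k$, $a_{ii}^k\ge\kappa$ ($\kappa>0$), nonnegative with $\mathbf{1}^T\mathbf{A}^k=\mathbf{1}^T$. Assumption III.14 on $\widetilde f_i:O\times O\to\mathbb{R}$: $\widetilde f_i(\cdot|\mathbf{x})$ is $\tau_i$-strongly convex on $X$ for all $\mathbf{x}\in X$; $C^1$ on $O$ with $\nabla\widetilde f_i(\mathbf{x}|\mathbf{x})=\nabla f_i(\mathbf{x})$; $\nabla\widetilde f_i(\mathbf{x}|\cdot)$ is $\widetilde L_i$-Lipschitz on $X$. SONATA with step-sizes $\gamma^k\in(0,1]$: initialize $\mathbf{x}_{(i)}^0\in X$, $\phi_{(i)}^0=1$, $\mathbf{y}_{(i)}^0=\nabla f_i(\mathbf{x}_{(i)}^0)$;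 at iteration $k$, $\widetilde{\mathbf{x}}_i^k=\operatorname{argmin}_{\mathbf{x}\in X}\{\widetilde f_i(\mathbf{x}|\mathbf{x}_{(i)}^k)+(I\mathbf{y}_{(i)}^k-\nabla f_i(\mathbf{x}_{(i)}^k))^T(\mathbf{x}-\mathbf{x}_{(i)}^k)+G(\mathbf{x})\}$, $\mathbf{x}_{(i)}^{k+1/2}=\mathbf{x}_{(i)}^k+\gamma^k(\widetilde{\mathbf{x}}_i^k-\mathbf{x}_{(i)}^k)$, $\phi_{(i)}^{k+1}=\sum_ja_{ij}^k\phi_{(j)}^k$, $\mathbf{x}_{(i)}^{k+1}=\frac{1}{\phi_{(i)}^{k+1}}\sum_ja_{ij}^k\phi_{(j)}^k\mathbf{x}_{(j)}^{k+1/2}$, $\mathbf{y}_{(i)}^{k+1}=\frac{1}{\phi_{(i)}^{k+1}}\sum_ja_{ij}^k\phi_{(j)}^k\mathbf{y}_{(j)}^k+\frac{1}{\phi_{(i)}^{k+1}}(\nabla f_i(\mathbf{x}_{(i)}^{k+1})-\nabla f_i(\mathbf{x}_{(i)}^k))$. The map $\widehat{\mathbf{x}}_i(\mathbf{z})\triangleq\operatorname{argmin}_{\mathbf{x}\in X}\{\widetilde f_i(\mathbf{x}|\mathbf{z})+(\nabla F(\mathbf{z})-\nabla f_i(\mathbf{z}))^T(\mathbf{x}-\mathbf{z})+G(\mathbf{x})\}$ for $\mathbf{z}\in X$. *)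

theory Defs
  imports "HOL-Analysis.Analysis"
begin

definition strongly_convex_on :: "real \<Rightarrow> 'a::real_normed_vector set \<Rightarrow> ('a \<Rightarrow> real) \<Rightarrow> bool" where
  "strongly_convex_on tau X h \<longleftrightarrow> tau > 0 \<and>
     (\<forall>x\<in>X. \<forall>y\<in>X. \<forall>t::real. 0 \<le> t \<and> t \<le> 1 \<longrightarrow>
        h ((1 - t) *\<^sub>R x + t *\<^sub>R y) \<le> (1 - t) * h x + t * h y - tau / 2 * t * (1 - t) * (norm (x - y))\<^sup>2)"

definition argmin_on :: "'a set \<Rightarrow> ('a \<Rightarrow> real) \<Rightarrow> 'a" where
  "argmin_on X h = (SOME x. x \<in> X \<and> (\<forall>y\<in>X. h x \<le> h y))"

definition strongly_connected_on :: "nat set \<Rightarrow> (nat \<times> nat) set \<Rightarrow> bool" where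
  "strongly_connected_on V E \<longleftrightarrow> (\<forall>i\<in>V. \<forall>j\<in>V. (i, j) \<in> (E \<inter> (V \<times> V))\<^sup>*)"

definition xhat :: "'a::real_inner set \<Rightarrow> nat \<Rightarrow> (nat \<Rightarrow> 'a \<Rightarrow> 'a \<Rightarrow> real) \<Rightarrow> (nat \<Rightarrow> 'a \<Rightarrow> 'a)
    \<Rightarrow> ('a \<Rightarrow> real) \<Rightarrow> nat \<Rightarrow> 'a \<Rightarrow> 'a" where
  "xhat X N ft gradf G i z =
     argmin_on X (\<lambda>w. ft i w z + inner ((\<Sum>j\<in>{1..N}. gradf j z) - gradf i z) (w - z) + G w)"

end

theory Submission
  imports Defs
begin

(* Both xt_i^k and xhat_i(x_i^k) minimize the tau_i-strongly convex surrogate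
   ft_i(w | x_i^k) + <c, w - x_i^k> + G(w) over X, for the directions c = N y_i^k - grad f_i(x_i^k)
   and c = grad F(x_i^k) - grad f_i(x_i^k) respectively, and strong convexity makes the minimizer
   (2 / tau_i)-Lipschitz in c.  Since the mixing matrices are column stochastic, SONATA keeps
   sum_j phi_j y_j = sum_j grad f_j(x_j) (gradient tracking), so the difference of the two
   directions is N (y_i - ybar_phi) + sum_j (grad f_j(x_j) - grad f_j(x_i)), and the Lipschitz
   gradients bound the second term by the consensus errors |x_j - xbar_phi|. *)

lemma strongly_convex_onD:
  assumes "strongly_convex_on tau X h" "x \<in> X" "y \<in> X" "0 \<le> t" "t \<le> 1"
  shows "h ((1 - t) *\<^sub>R x + t *\<^sub>R y) \<le> (1 - t) * h x + t * h y - tau / 2 * t * (1 - t) * (norm (x - y))\<^sup>2"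
  using assms unfolding strongly_convex_on_def by blast

lemma strongly_convex_on_add_convex_on:
  assumes "strongly_convex_on tau X f" "convex_on X g"
  shows "strongly_convex_on tau X (\<lambda>w. f w + g w)"
  unfolding strongly_convex_on_def
proof (intro conjI ballI allI impI)
  show "tau > 0" using assms(1) by (simp add: strongly_convex_on_def)
  fix x y and t :: real assume xy: "x \<in> X" "y \<in> X" and t: "0 \<le> t \<and> t \<le> 1"
  have "f ((1 - t) *\<^sub>R x + t *\<^sub>R y) \<le> (1 - t) * f x + t * f y - tau / 2 * t * (1 - t) * (norm (x - y))\<^sup>2"
    using strongly_convex_onD[OF assms(1) xy] t by blast
  moreover have "g ((1 - t) *\<^sub>R x + t *\<^sub>R y) \<le> (1 - t) * g x + t * g y"
    using assms(2) xy t unfolding convex_on_def by auto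
  ultimately show "f ((1 - t) *\<^sub>R x + t *\<^sub>R y) + g ((1 - t) *\<^sub>R x + t *\<^sub>R y)
        \<le> (1 - t) * (f x + g x) + t * (f y + g y) - tau / 2 * t * (1 - t) * (norm (x - y))\<^sup>2"
    by (simp add: algebra_simps)
qed

lemma convex_on_inner_diff:
  assumes "convex X"
  shows "convex_on X (\<lambda>w. inner c (w - z))"
  unfolding convex_on_def
proof (intro conjI ballI allI impI assms)
  fix x y and u v :: real assume "u + v = 1"
  then have "inner c (u *\<^sub>R x + v *\<^sub>R y - z) = u * inner c (x - z) + v * inner c (y - z)"
    by (simp add: algebra_simps flip: distrib_right)
  then show "inner c (u *\<^sub>R x + v *\<^sub>R y - z) \<le> u * inner c (x - z) + v * inner c (y - z)"
    by simp
qed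

lemma strongly_convex_on_sublevel_bounded:
  assumes sc: "strongly_convex_on tau X h" and "convex X" "x0 \<in> X" "w \<in> X"
    and lower: "\<forall>p\<in>X \<inter> cball x0 1. m \<le> h p" and "h w \<le> h x0"
  shows "norm (w - x0) \<le> 1 + 2 * (h x0 - m) / tau"
proof -
  have tau: "tau > 0" using sc by (simp add: strongly_convex_on_def)
  have "m \<le> h x0" using lower \<open>x0 \<in> X\<close> by auto
  define d where "d = norm (w - x0)"
  show ?thesis
  proof (cases "d \<le> 1")
    case True
    moreover have "0 \<le> 2 * (h x0 - m) / tau" using \<open>m \<le> h x0\<close> tau by simp
    ultimately show ?thesis by (simp add: d_def)
  next
    case False
    define t where "t = 1 / d"
    have t: "0 \<le> t" "t \<le> 1" "t * d = 1" using False by (auto simp: t_def)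
    define p where "p = (1 - t) *\<^sub>R x0 + t *\<^sub>R w"
    have "p \<in> X" using convexD[OF \<open>convex X\<close> \<open>x0 \<in> X\<close> \<open>w \<in> X\<close>] t by (simp add: p_def)
    moreover have "dist x0 p = 1"
      using t by (simp add: p_def dist_norm d_def algebra_simps norm_minus_commute
          flip: scaleR_diff_right)
    ultimately have "m \<le> h p" using lower by auto
    also have "h p \<le> (1 - t) * h x0 + t * h w - tau / 2 * t * (1 - t) * (norm (x0 - w))\<^sup>2"
      using strongly_convex_onD[OF sc \<open>x0 \<in> X\<close> \<open>w \<in> X\<close> t(1,2)] by (simp add: p_def)
    also have "\<dots> \<le> h x0 - tau / 2 * (d - 1)"
    proof -
      have "t * (1 - t) * (norm (x0 - w))\<^sup>2 = (t * d) * (d - t * d)"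
        by (simp add: d_def norm_minus_commute algebra_simps power2_eq_square)
      also have "\<dots> = d - 1" using t(3) by simp
      finally have "tau / 2 * t * (1 - t) * (norm (x0 - w))\<^sup>2 = tau / 2 * (d - 1)"
        by (simp add: mult.assoc)
      moreover have "t * h w \<le> t * h x0" using \<open>h w \<le> h x0\<close> t by (simp add: mult_left_mono)
      moreover have "(1 - t) * h x0 = h x0 - t * h x0" by (simp add: algebra_simps)
      ultimately show ?thesis by linarith
    qed
    finally show ?thesis using tau by (simp add: d_def field_simps)
  qed
qed

lemma strongly_convex_on_attains_min:
  fixes h :: "'a::euclidean_space \<Rightarrow> real"
  assumes "closed X" "convex X" "X \<noteq> {}" "continuous_on X h" "strongly_convex_on tau X h"
  shows "\<exists>u\<in>X. \<forall>w\<in>X. h u \<le> h w"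
proof -
  obtain x0 where x0: "x0 \<in> X" using assms(3) by auto
  have min_on_ball: "\<exists>u\<in>X \<inter> cball x0 r. \<forall>p\<in>X \<inter> cball x0 r. h u \<le> h p" if "r \<ge> 0" for r
  proof (rule continuous_attains_inf)
    show "compact (X \<inter> cball x0 r)" using \<open>closed X\<close> by (simp add: closed_Int_compact)
    show "X \<inter> cball x0 r \<noteq> {}" using x0 that by auto
    show "continuous_on (X \<inter> cball x0 r) h" using assms(4) by (rule continuous_on_subset) auto
  qed
  obtain q where q: "\<forall>p\<in>X \<inter> cball x0 1. h q \<le> h p" using min_on_ball[of 1] by auto
  define R where "R = 1 + 2 * (h x0 - h q) / tau"
  have "R \<ge> 0" using q x0 assms(5) by (auto simp: R_def strongly_convex_on_def)
  then obtain u where u: "u \<in> X \<inter> cball x0 R" "\<forall>p\<in>X \<inter> cball x0 R. h u \<le> h p"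
    using min_on_ball by blast
  have "h u \<le> h w" if "w \<in> X" for w
  proof (cases "h w \<le> h x0")
    case True
    then have "w \<in> cball x0 R"
      using strongly_convex_on_sublevel_bounded[OF assms(5,2) x0 that q]
      by (simp add: R_def dist_norm norm_minus_commute)
    then show ?thesis using u that by auto
  next
    case False
    moreover have "h u \<le> h x0" using u x0 \<open>R \<ge> 0\<close> by simp
    ultimately show ?thesis by linarith
  qed
  then show ?thesis using u by auto
qed

lemma argmin_on_strongly_convex:
  fixes h :: "'a::euclidean_space \<Rightarrow> real"
  assumes "closed X" "convex X" "X \<noteq> {}" "continuous_on X h" "strongly_convex_on tau X h"
  shows "argmin_on X h \<in> X" "\<forall>w\<in>X. h (argmin_on X h) \<le> h w"
  using someI_ex[OF strongly_convex_on_attains_min[OF assms, simplified Bex_def]]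
  unfolding argmin_on_def by auto

text \<open>Adding the midpoint inequalities of the two functions at their minimizers gives
  \<open>tau/2 \<parallel>u - v\<parallel>\<^sup>2 \<le> \<langle>c, v - u\<rangle>\<close>.\<close>
lemma strongly_convex_minimizers_dist:
  fixes h1 h2 :: "'a::real_inner \<Rightarrow> real"
  assumes "convex X" and sc1: "strongly_convex_on tau X h1" and sc2: "strongly_convex_on tau X h2"
    and u: "u \<in> X" "\<forall>w\<in>X. h1 u \<le> h1 w" and v: "v \<in> X" "\<forall>w\<in>X. h2 v \<le> h2 w"
    and diff: "\<And>w. w \<in> X \<Longrightarrow> h1 w - h2 w = inner c w + k"
  shows "norm (u - v) \<le> 2 / tau * norm c"
proof -
  have tau: "tau > 0" using sc1 by (simp add: strongly_convex_on_def)
  define m where "m = (1 - 1/2) *\<^sub>R u + (1/2::real) *\<^sub>R v"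
  have m': "m = (1 - 1/2) *\<^sub>R v + (1/2::real) *\<^sub>R u" by (simp add: m_def algebra_simps)
  have "m \<in> X" using convexD[OF \<open>convex X\<close> u(1) v(1)] by (simp add: m_def)
  define d where "d = norm (u - v)"
  have "h1 m \<le> h1 u / 2 + h1 v / 2 - tau * d\<^sup>2 / 8"
    using strongly_convex_onD[OF sc1 u(1) v(1), of "1/2"] by (simp add: m_def d_def)
  moreover have "h2 m \<le> h2 v / 2 + h2 u / 2 - tau * d\<^sup>2 / 8"
    using strongly_convex_onD[OF sc2 v(1) u(1), of "1/2"] by (simp add: m' d_def norm_minus_commute)
  moreover have "h1 u \<le> h1 m" "h2 v \<le> h2 m" using u v \<open>m \<in> X\<close> by auto
  ultimately have "tau / 2 * d\<^sup>2 \<le> (h1 v - h2 v) - (h1 u - h2 u)" by linarith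
  also have "\<dots> = inner c (v - u)" using diff u v by (simp add: inner_diff_right)
  also have "\<dots> \<le> norm c * d"
    using norm_cauchy_schwarz[of c "v - u"] by (simp add: d_def norm_minus_commute)
  finally have "tau / 2 * d\<^sup>2 \<le> norm c * d" .
  then have "tau / 2 * d \<le> norm c" if "d > 0"
    using that by (simp add: power2_eq_square)
  then show ?thesis using tau by (cases "d = 0") (auto simp: d_def field_simps)
qed

lemma norm_diff_le_sum_deviations:
  fixes v :: "'i \<Rightarrow> 'a::real_normed_vector"
  assumes "finite I" "i \<in> I" "j \<in> I"
  shows "norm (v j - v i) \<le> 2 * (\<Sum>l\<in>I. norm (v l - c))"
proof -
  have "norm (v j - v i) \<le> norm (v j - c) + norm (v i - c)"
    using norm_triangle_ineq4[of "v j - c" "v i - c"] by simp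
  also have "\<dots> \<le> (\<Sum>l\<in>I. norm (v l - c)) + (\<Sum>l\<in>I. norm (v l - c))"
    using assms by (intro add_mono member_le_sum) auto
  finally show ?thesis by simp
qed

lemma norm_sum_lipschitz_diff_le:
  assumes "finite I" "z \<in> X" "\<And>j. j \<in> I \<Longrightarrow> p j \<in> X"
    and "\<And>j. j \<in> I \<Longrightarrow> lipschitz_on (L j) X (g j)"
  shows "norm (\<Sum>j\<in>I. g j (p j) - g j z) \<le> (\<Sum>j\<in>I. L j * norm (p j - z))"
proof -
  have "norm (\<Sum>j\<in>I. g j (p j) - g j z) \<le> (\<Sum>j\<in>I. norm (g j (p j) - g j z))"
    by (rule norm_sum)
  also have "\<dots> \<le> (\<Sum>j\<in>I. L j * norm (p j - z))"
    using lipschitz_onD assms by (intro sum_mono) (fastforce simp: dist_norm)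
  finally show ?thesis .
qed

lemma normalized_weighted_sum_in_convex:
  assumes "finite I" "convex X" "\<And>j. j \<in> I \<Longrightarrow> 0 \<le> w j" "(\<Sum>j\<in>I. w j) > 0"
    and "\<And>j. j \<in> I \<Longrightarrow> p j \<in> X"
  shows "(1 / (\<Sum>j\<in>I. w j)) *\<^sub>R (\<Sum>j\<in>I. w j *\<^sub>R p j) \<in> X"
proof -
  have "(\<Sum>j\<in>I. w j / (\<Sum>l\<in>I. w l)) = 1"
    using assms(4) by (simp add: sum_divide_distrib[symmetric])
  then have "(\<Sum>j\<in>I. (w j / (\<Sum>l\<in>I. w l)) *\<^sub>R p j) \<in> X"
    using assms by (intro convex_sum) auto
  then show ?thesis by (simp add: scaleR_sum_right)
qed

lemma sum_mixing_column_stochastic: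
  fixes v :: "'i \<Rightarrow> 'a::real_vector"
  assumes "\<And>j. j \<in> I \<Longrightarrow> (\<Sum>i\<in>I. a i j) = 1"
  shows "(\<Sum>i\<in>I. \<Sum>j\<in>I. (a i j * \<phi> j) *\<^sub>R v j) = (\<Sum>j\<in>I. \<phi> j *\<^sub>R v j)"
proof -
  have "(\<Sum>i\<in>I. \<Sum>j\<in>I. (a i j * \<phi> j) *\<^sub>R v j) = (\<Sum>j\<in>I. ((\<Sum>i\<in>I. a i j) * \<phi> j) *\<^sub>R v j)"
    by (subst sum.swap) (simp only: scaleR_left.sum sum_distrib_right)
  also have "\<dots> = (\<Sum>j\<in>I. \<phi> j *\<^sub>R v j)" using assms by simp
  finally show ?thesis .
qed

locale sonata =
  fixes X Om :: "'a::euclidean_space set" and N :: nat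
    and gradf :: "nat \<Rightarrow> 'a \<Rightarrow> 'a" and L :: "nat \<Rightarrow> real" and G :: "'a \<Rightarrow> real"
    and ft :: "nat \<Rightarrow> 'a \<Rightarrow> 'a \<Rightarrow> real" and gradft :: "nat \<Rightarrow> 'a \<Rightarrow> 'a \<Rightarrow> 'a"
    and tau :: "nat \<Rightarrow> real"
    and a :: "nat \<Rightarrow> nat \<Rightarrow> nat \<Rightarrow> real" and \<kappa> :: real and \<gamma> :: "nat \<Rightarrow> real"
    and x xh xt y :: "nat \<Rightarrow> nat \<Rightarrow> 'a" and \<phi> :: "nat \<Rightarrow> nat \<Rightarrow> real"
  assumes N_pos: "N \<ge> 1"
    and X_ne: "X \<noteq> {}" and X_closed: "closed X" and X_convex: "convex X"
    and O_open: "open Om" and X_sub_O: "X \<subseteq> Om"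
    and f_lip: "\<And>i. i \<in> {1..N} \<Longrightarrow> lipschitz_on (L i) X (gradf i)"
    and G_convex: "convex_on Om G"
    and \<kappa>_pos: "\<kappa> > 0"
    and a_nonneg: "\<And>k i j. i \<in> {1..N} \<Longrightarrow> j \<in> {1..N} \<Longrightarrow> a k i j \<ge> 0"
    and a_diag: "\<And>k i. i \<in> {1..N} \<Longrightarrow> a k i i \<ge> \<kappa>"
    and a_colstoch: "\<And>k j. j \<in> {1..N} \<Longrightarrow> (\<Sum>i\<in>{1..N}. a k i j) = 1"
    and ft_sc: "\<And>i z. i \<in> {1..N} \<Longrightarrow> z \<in> X \<Longrightarrow> strongly_convex_on (tau i) X (\<lambda>w. ft i w z)"
    and ft_diff: "\<And>i w z. i \<in> {1..N} \<Longrightarrow> w \<in> Om \<Longrightarrow> z \<in> Om \<Longrightarrow>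
                   ((\<lambda>v. ft i v z) has_derivative (\<lambda>h. inner (gradft i w z) h)) (at w)"
    and \<gamma>_range: "\<And>k. 0 < \<gamma> k \<and> \<gamma> k \<le> 1"
    and init_x: "\<And>i. i \<in> {1..N} \<Longrightarrow> x 0 i \<in> X"
    and init_\<phi>: "\<And>i. i \<in> {1..N} \<Longrightarrow> \<phi> 0 i = 1"
    and init_y: "\<And>i. i \<in> {1..N} \<Longrightarrow> y 0 i = gradf i (x 0 i)"
    and step_xt: "\<And>k i. i \<in> {1..N} \<Longrightarrow> xt k i =
        argmin_on X (\<lambda>w. ft i w (x k i) + inner (real N *\<^sub>R y k i - gradf i (x k i)) (w - x k i) + G w)"
    and step_xh: "\<And>k i. i \<in> {1..N} \<Longrightarrow> xh k i = x k i + \<gamma> k *\<^sub>R (xt k i - x k i)"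
    and step_\<phi>: "\<And>k i. i \<in> {1..N} \<Longrightarrow> \<phi> (Suc k) i = (\<Sum>j\<in>{1..N}. a k i j * \<phi> k j)"
    and step_x: "\<And>k i. i \<in> {1..N} \<Longrightarrow> x (Suc k) i =
        (1 / \<phi> (Suc k) i) *\<^sub>R (\<Sum>j\<in>{1..N}. (a k i j * \<phi> k j) *\<^sub>R xh k j)"
    and step_y: "\<And>k i. i \<in> {1..N} \<Longrightarrow> y (Suc k) i =
        (1 / \<phi> (Suc k) i) *\<^sub>R (\<Sum>j\<in>{1..N}. (a k i j * \<phi> k j) *\<^sub>R y k j)
        + (1 / \<phi> (Suc k) i) *\<^sub>R (gradf i (x (Suc k) i) - gradf i (x k i))"
begin

definition surrogate :: "nat \<Rightarrow> 'a \<Rightarrow> 'a \<Rightarrow> 'a \<Rightarrow> real" where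
  "surrogate i z c = (\<lambda>w. ft i w z + inner c (w - z) + G w)"

definition x_avg :: "nat \<Rightarrow> 'a" where
  "x_avg k = (1 / real N) *\<^sub>R (\<Sum>j\<in>{1..N}. \<phi> k j *\<^sub>R x k j)"

definition y_avg :: "nat \<Rightarrow> 'a" where
  "y_avg k = (1 / real N) *\<^sub>R (\<Sum>j\<in>{1..N}. \<phi> k j *\<^sub>R y k j)"

lemma tau_pos: "i \<in> {1..N} \<Longrightarrow> tau i > 0"
  using ft_sc X_ne by (auto simp: strongly_convex_on_def)

lemma L_nonneg: "i \<in> {1..N} \<Longrightarrow> L i \<ge> 0"
  using f_lip lipschitz_on_nonneg by blast

lemma surrogate_strongly_convex:
  assumes "i \<in> {1..N}" "z \<in> X"
  shows "strongly_convex_on (tau i) X (surrogate i z c)"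
proof -
  have "convex_on X (\<lambda>w. inner c (w - z) + G w)"
    using convex_on_inner_diff[OF X_convex] convex_on_subset[OF G_convex X_sub_O X_convex]
    by (rule convex_on_add)
  from strongly_convex_on_add_convex_on[OF ft_sc[OF assms] this] show ?thesis
    by (simp add: surrogate_def add.assoc)
qed

lemma surrogate_continuous:
  assumes "i \<in> {1..N}" "z \<in> X"
  shows "continuous_on X (surrogate i z c)"
proof -
  have "continuous_on X (\<lambda>w. ft i w z)"
    using has_derivative_continuous[OF ft_diff] assms X_sub_O
    by (intro continuous_at_imp_continuous_on) blast
  moreover have "continuous_on X G"
    using continuous_on_subset[OF convex_on_continuous[OF O_open G_convex] X_sub_O] .
  ultimately show ?thesis unfolding surrogate_def by (intro continuous_intros)
qed

lemma argmin_surrogate: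
  assumes "i \<in> {1..N}" "z \<in> X"
  shows "argmin_on X (surrogate i z c) \<in> X"
    and "\<forall>w\<in>X. surrogate i z c (argmin_on X (surrogate i z c)) \<le> surrogate i z c w"
  using argmin_on_strongly_convex[OF X_closed X_convex X_ne surrogate_continuous[OF assms]
      surrogate_strongly_convex[OF assms]] by auto

lemma argmin_surrogate_dist:
  assumes "i \<in> {1..N}" "z \<in> X"
  shows "norm (argmin_on X (surrogate i z c) - argmin_on X (surrogate i z d)) \<le> 2 / tau i * norm (c - d)"
proof (rule strongly_convex_minimizers_dist[OF X_convex
      surrogate_strongly_convex[OF assms] surrogate_strongly_convex[OF assms]
      argmin_surrogate[OF assms] argmin_surrogate[OF assms]])
  show "surrogate i z c w - surrogate i z d w = inner (c - d) w + (- inner (c - d) z)" for w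
    by (simp add: surrogate_def inner_diff_left inner_diff_right algebra_simps)
qed

lemma xt_eq_argmin_surrogate:
  "i \<in> {1..N} \<Longrightarrow> xt k i = argmin_on X (surrogate i (x k i) (real N *\<^sub>R y k i - gradf i (x k i)))"
  using step_xt by (simp add: surrogate_def)

lemma xhat_eq_argmin_surrogate:
  "xhat X N ft gradf G i z = argmin_on X (surrogate i z ((\<Sum>j\<in>{1..N}. gradf j z) - gradf i z))"
  by (simp add: xhat_def surrogate_def)

lemma weights_pos: "i \<in> {1..N} \<Longrightarrow> \<phi> k i > 0"
proof (induction k arbitrary: i)
  case 0
  then show ?case using init_\<phi> by simp
next
  case (Suc k)
  have "0 < a k i i * \<phi> k i"
    using a_diag[OF Suc.prems, of k] \<kappa>_pos Suc.IH[OF Suc.prems] by (intro mult_pos_pos) auto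
  also have "\<dots> \<le> (\<Sum>j\<in>{1..N}. a k i j * \<phi> k j)"
  proof (rule member_le_sum)
    show "0 \<le> a k i j * \<phi> k j" if "j \<in> {1..N} - {i}" for j
      using a_nonneg[OF Suc.prems, of j k] Suc.IH[of j] that by simp
  qed (use Suc.prems in auto)
  finally show ?case using step_\<phi>[OF Suc.prems] by simp
qed

lemma iterates_in_X: "i \<in> {1..N} \<Longrightarrow> x k i \<in> X"
proof (induction k arbitrary: i)
  case 0
  then show ?case using init_x by simp
next
  case (Suc k)
  have "xh k j \<in> X" if j: "j \<in> {1..N}" for j
  proof -
    have "xt k j \<in> X" using argmin_surrogate(1)[OF j Suc.IH[OF j]] xt_eq_argmin_surrogate[OF j] by simp
    then have "(1 - \<gamma> k) *\<^sub>R x k j + \<gamma> k *\<^sub>R xt k j \<in> X"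
      using convexD[OF X_convex Suc.IH[OF j]] \<gamma>_range[of k] by auto
    moreover have "xh k j = (1 - \<gamma> k) *\<^sub>R x k j + \<gamma> k *\<^sub>R xt k j"
      using step_xh[OF j] by (simp add: algebra_simps)
    ultimately show ?thesis by simp
  qed
  moreover have "0 \<le> a k i j * \<phi> k j" if "j \<in> {1..N}" for j
    using a_nonneg[OF Suc.prems that, of k] weights_pos[OF that, of k] by simp
  moreover have "(\<Sum>j\<in>{1..N}. a k i j * \<phi> k j) > 0"
    using weights_pos[of i "Suc k"] step_\<phi>[OF Suc.prems] Suc.prems by simp
  ultimately show ?case
    using normalized_weighted_sum_in_convex[OF _ X_convex, of "{1..N}" "\<lambda>j. a k i j * \<phi> k j" "xh k"]
      step_x[OF Suc.prems] step_\<phi>[OF Suc.prems] by simp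
qed

lemma gradient_tracking: "(\<Sum>i\<in>{1..N}. \<phi> k i *\<^sub>R y k i) = (\<Sum>i\<in>{1..N}. gradf i (x k i))"
proof (induction k)
  case 0
  then show ?case using init_\<phi> init_y by simp
next
  case (Suc k)
  have "\<phi> (Suc k) i *\<^sub>R y (Suc k) i = (\<Sum>j\<in>{1..N}. (a k i j * \<phi> k j) *\<^sub>R y k j)
      + (gradf i (x (Suc k) i) - gradf i (x k i))" if "i \<in> {1..N}" for i
    using step_y[OF that] weights_pos[OF that, of "Suc k"] by (simp add: scaleR_add_right)
  then have "(\<Sum>i\<in>{1..N}. \<phi> (Suc k) i *\<^sub>R y (Suc k) i)
      = (\<Sum>i\<in>{1..N}. \<Sum>j\<in>{1..N}. (a k i j * \<phi> k j) *\<^sub>R y k j)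
        + ((\<Sum>i\<in>{1..N}. gradf i (x (Suc k) i)) - (\<Sum>i\<in>{1..N}. gradf i (x k i)))"
    by (simp add: sum.distrib sum_subtractf)
  also have "(\<Sum>i\<in>{1..N}. \<Sum>j\<in>{1..N}. (a k i j * \<phi> k j) *\<^sub>R y k j) = (\<Sum>j\<in>{1..N}. \<phi> k j *\<^sub>R y k j)"
    using a_colstoch by (rule sum_mixing_column_stochastic)
  finally show ?case using Suc.IH by simp
qed


lemma direction_gap:
  "(real N *\<^sub>R y k i - gradf i (x k i)) - ((\<Sum>j\<in>{1..N}. gradf j (x k i)) - gradf i (x k i))
     = real N *\<^sub>R (y k i - y_avg k) + (\<Sum>j\<in>{1..N}. gradf j (x k j) - gradf j (x k i))"
proof -
  have "real N *\<^sub>R y_avg k = (\<Sum>j\<in>{1..N}. gradf j (x k j))"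
    using gradient_tracking[of k] N_pos by (simp add: y_avg_def)
  then show ?thesis by (simp add: scaleR_diff_right sum_subtractf)
qed

lemma best_response_gap:
  assumes i: "i \<in> {1..N}"
  shows "norm (xt k i - xhat X N ft gradf G i (x k i))
    \<le> 2 / tau i * (real N * norm (y k i - y_avg k)
                   + 2 * (\<Sum>j\<in>{1..N}. L j) * (\<Sum>j\<in>{1..N}. norm (x k j - x_avg k)))"
proof -
  let ?A = "norm (y k i - y_avg k)" and ?S = "\<Sum>j\<in>{1..N}. norm (x k j - x_avg k)"
  let ?g = "\<Sum>j\<in>{1..N}. gradf j (x k j) - gradf j (x k i)"
  have "norm ?g \<le> (\<Sum>j\<in>{1..N}. L j * norm (x k j - x k i))"
    using iterates_in_X i f_lip by (intro norm_sum_lipschitz_diff_le[where X = X]) auto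
  also have "\<dots> \<le> (\<Sum>j\<in>{1..N}. L j * (2 * ?S))"
    using norm_diff_le_sum_deviations[OF _ i] L_nonneg
    by (intro sum_mono mult_left_mono) auto
  also have "\<dots> = 2 * (\<Sum>j\<in>{1..N}. L j) * ?S"
    by (simp add: sum_distrib_right[symmetric])
  finally have "norm (real N *\<^sub>R (y k i - y_avg k) + ?g) \<le> real N * ?A + 2 * (\<Sum>j\<in>{1..N}. L j) * ?S"
    using norm_triangle_ineq[of "real N *\<^sub>R (y k i - y_avg k)" ?g] by simp
  then have "2 / tau i * norm (real N *\<^sub>R (y k i - y_avg k) + ?g)
      \<le> 2 / tau i * (real N * ?A + 2 * (\<Sum>j\<in>{1..N}. L j) * ?S)"
    using tau_pos[OF i] by (intro mult_left_mono) auto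
  moreover have "norm (xt k i - xhat X N ft gradf G i (x k i))
      \<le> 2 / tau i * norm (real N *\<^sub>R (y k i - y_avg k) + ?g)"
    using argmin_surrogate_dist[OF i iterates_in_X[OF i],
        where c = "real N *\<^sub>R y k i - gradf i (x k i)"
          and d = "(\<Sum>j\<in>{1..N}. gradf j (x k i)) - gradf i (x k i)"]
    unfolding xt_eq_argmin_surrogate[OF i] xhat_eq_argmin_surrogate direction_gap .
  ultimately show ?thesis by linarith
qed

lemma best_response_error_bound:
  "\<exists>B2>0. \<forall>k. \<forall>i\<in>{1..N}.
     norm (xt k i - xhat X N ft gradf G i (x k i))
       \<le> B2 * (norm (y k i - y_avg k) + (\<Sum>j\<in>{1..N}. norm (x k j - x_avg k)))"
proof -
  define T where "T = Min (tau ` {1..N})"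
  define \<Lambda> where "\<Lambda> = (\<Sum>j\<in>{1..N}. L j)"
  have "T > 0" using tau_pos N_pos by (simp add: T_def)
  have "\<Lambda> \<ge> 0" unfolding \<Lambda>_def by (rule sum_nonneg) (rule L_nonneg)
  have "norm (xt k i - xhat X N ft gradf G i (x k i))
      \<le> (2 / T * (real N + 2 * \<Lambda>)) * (norm (y k i - y_avg k) + (\<Sum>j\<in>{1..N}. norm (x k j - x_avg k)))"
    if i: "i \<in> {1..N}" for k i
  proof -
    let ?A = "norm (y k i - y_avg k)" and ?S = "\<Sum>j\<in>{1..N}. norm (x k j - x_avg k)"
    have "norm (xt k i - xhat X N ft gradf G i (x k i)) \<le> 2 / tau i * (real N * ?A + 2 * \<Lambda> * ?S)"
      using best_response_gap[OF i, of k] by (simp add: \<Lambda>_def)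
    also have "\<dots> \<le> 2 / T * ((real N + 2 * \<Lambda>) * (?A + ?S))"
    proof (rule mult_mono)
      show "2 / tau i \<le> 2 / T" using tau_pos[OF i] \<open>T > 0\<close> i by (simp add: T_def frac_le)
      show "real N * ?A + 2 * \<Lambda> * ?S \<le> (real N + 2 * \<Lambda>) * (?A + ?S)"
        using \<open>\<Lambda> \<ge> 0\<close> by (simp add: algebra_simps sum_nonneg)
    qed (use \<open>T > 0\<close> \<open>\<Lambda> \<ge> 0\<close> in \<open>auto intro!: add_nonneg_nonneg mult_nonneg_nonneg sum_nonneg\<close>)
    finally show ?thesis by (simp only: mult.assoc)
  qed
  moreover have "2 / T * (real N + 2 * \<Lambda>) > 0" using \<open>T > 0\<close> \<open>\<Lambda> \<ge> 0\<close> N_pos by simp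
  ultimately show ?thesis by blast
qed

end

theorem mainTheorem16:
  fixes X Om :: "'a::euclidean_space set"
    and N :: nat
    and f :: "nat \<Rightarrow> 'a \<Rightarrow> real" and gradf :: "nat \<Rightarrow> 'a \<Rightarrow> 'a" and L :: "nat \<Rightarrow> real"
    and G :: "'a \<Rightarrow> real"
    and ft :: "nat \<Rightarrow> 'a \<Rightarrow> 'a \<Rightarrow> real" and gradft :: "nat \<Rightarrow> 'a \<Rightarrow> 'a \<Rightarrow> 'a"
    and tau Lt :: "nat \<Rightarrow> real"
    and E :: "nat \<Rightarrow> (nat \<times> nat) set" and B :: nat
    and a :: "nat \<Rightarrow> nat \<Rightarrow> nat \<Rightarrow> real" and \<kappa> :: real
    and \<gamma> :: "nat \<Rightarrow> real"
    and x xh xt y :: "nat \<Rightarrow> nat \<Rightarrow> 'a" and \<phi> :: "nat \<Rightarrow> nat \<Rightarrow> real"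
  assumes N_pos: "N \<ge> 1"
    and X_ne: "X \<noteq> {}" and X_closed: "closed X" and X_convex: "convex X"
    and O_open: "open Om" and X_sub_O: "X \<subseteq> Om"
    and f_diff: "\<And>i w. i \<in> {1..N} \<Longrightarrow> w \<in> Om \<Longrightarrow> (f i has_derivative (\<lambda>h. inner (gradf i w) h)) (at w)"
    and f_C1: "\<And>i. i \<in> {1..N} \<Longrightarrow> continuous_on Om (gradf i)"
    and f_lip: "\<And>i. i \<in> {1..N} \<Longrightarrow> lipschitz_on (L i) X (gradf i)"
    and G_convex: "convex_on Om G"
    and V_bdd: "bdd_below ((\<lambda>w. (\<Sum>i\<in>{1..N}. f i w) + G w) ` X)"
    and E_nodes: "\<And>k. E k \<subseteq> {1..N} \<times> {1..N}"
    and B_pos: "B \<ge> 1"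
    and B_conn: "\<And>k. strongly_connected_on {1..N} (\<Union>t\<in>{k..<k+B}. E t)"
    and \<kappa>_pos: "\<kappa> > 0"
    and a_nonneg: "\<And>k i j. i \<in> {1..N} \<Longrightarrow> j \<in> {1..N} \<Longrightarrow> a k i j \<ge> 0"
    and a_zero: "\<And>k i j. i \<in> {1..N} \<Longrightarrow> j \<in> {1..N} \<Longrightarrow> j \<noteq> i \<Longrightarrow> (j, i) \<notin> E k \<Longrightarrow> a k i j = 0"
    and a_edge: "\<And>k i j. i \<in> {1..N} \<Longrightarrow> j \<in> {1..N} \<Longrightarrow> (j, i) \<in> E k \<Longrightarrow> a k i j \<ge> \<kappa>"
    and a_diag: "\<And>k i. i \<in> {1..N} \<Longrightarrow> a k i i \<ge> \<kappa>"
    and a_colstoch: "\<And>k j. j \<in> {1..N} \<Longrightarrow> (\<Sum>i\<in>{1..N}. a k i j) = 1"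
    and ft_sc: "\<And>i z. i \<in> {1..N} \<Longrightarrow> z \<in> X \<Longrightarrow> strongly_convex_on (tau i) X (\<lambda>w. ft i w z)"
    and ft_diff: "\<And>i w z. i \<in> {1..N} \<Longrightarrow> w \<in> Om \<Longrightarrow> z \<in> Om \<Longrightarrow>
                   ((\<lambda>v. ft i v z) has_derivative (\<lambda>h. inner (gradft i w z) h)) (at w)"
    and ft_C1: "\<And>i z. i \<in> {1..N} \<Longrightarrow> z \<in> Om \<Longrightarrow> continuous_on Om (\<lambda>w. gradft i w z)"
    and ft_grad: "\<And>i w. i \<in> {1..N} \<Longrightarrow> w \<in> X \<Longrightarrow> gradft i w w = gradf i w"
    and ft_lip: "\<And>i w. i \<in> {1..N} \<Longrightarrow> w \<in> X \<Longrightarrow> lipschitz_on (Lt i) X (\<lambda>z. gradft i w z)"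
    and \<gamma>_range: "\<And>k. 0 < \<gamma> k \<and> \<gamma> k \<le> 1"
    and init_x: "\<And>i. i \<in> {1..N} \<Longrightarrow> x 0 i \<in> X"
    and init_\<phi>: "\<And>i. i \<in> {1..N} \<Longrightarrow> \<phi> 0 i = 1"
    and init_y: "\<And>i. i \<in> {1..N} \<Longrightarrow> y 0 i = gradf i (x 0 i)"
    and step_xt: "\<And>k i. i \<in> {1..N} \<Longrightarrow> xt k i =
        argmin_on X (\<lambda>w. ft i w (x k i) + inner (real N *\<^sub>R y k i - gradf i (x k i)) (w - x k i) + G w)"
    and step_xh: "\<And>k i. i \<in> {1..N} \<Longrightarrow> xh k i = x k i + \<gamma> k *\<^sub>R (xt k i - x k i)"
    and step_\<phi>: "\<And>k i. i \<in> {1..N} \<Longrightarrow> \<phi> (Suc k) i = (\<Sum>j\<in>{1..N}. a k i j * \<phi> k j)"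
    and step_x: "\<And>k i. i \<in> {1..N} \<Longrightarrow> x (Suc k) i =
        (1 / \<phi> (Suc k) i) *\<^sub>R (\<Sum>j\<in>{1..N}. (a k i j * \<phi> k j) *\<^sub>R xh k j)"
    and step_y: "\<And>k i. i \<in> {1..N} \<Longrightarrow> y (Suc k) i =
        (1 / \<phi> (Suc k) i) *\<^sub>R (\<Sum>j\<in>{1..N}. (a k i j * \<phi> k j) *\<^sub>R y k j)
        + (1 / \<phi> (Suc k) i) *\<^sub>R (gradf i (x (Suc k) i) - gradf i (x k i))"
  shows "\<exists>B2>0. \<forall>k. \<forall>i\<in>{1..N}.
           norm (xt k i - xhat X N ft gradf G i (x k i))
             \<le> B2 * (norm (y k i - (1 / real N) *\<^sub>R (\<Sum>j\<in>{1..N}. \<phi> k j *\<^sub>R y k j))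
                     + (\<Sum>j\<in>{1..N}. norm (x k j - (1 / real N) *\<^sub>R (\<Sum>l\<in>{1..N}. \<phi> k l *\<^sub>R x k l))))"
proof -
  \<comment> \<open>The network hypotheses, the lower bound on V and the conditions tying f and ft to
    their gradients are needed only for convergence, not for this estimate.\<close>
  interpret sonata X Om N gradf L G ft gradft tau a \<kappa> \<gamma> x xh xt y \<phi>
    by unfold_locales (fact assms)+
  show ?thesis
    using best_response_error_bound by (simp add: x_avg_def y_avg_def)
qed

end
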